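(* Let $A$ be a positive $2\times 2$ row stochastic matrix that is not column stochastic. If the column scaled matrix $A\,Y(A)$ is doubly stochastic, then $A=\begin{pmatrix} a & 1-a\\ a & 1-a\end{pmatrix}$ for some $a\in(0,1)$ with $a\neq 1/2$, and $S(A)=A\,Y(A)=\begin{pmatrix} 1/2 & 1/2\\ 1/2 & 1/2\end{pmatrix}$. Let $A$ be a positive $2\times 2$ column stochastic matrix that is not row stochastic. If the row scaled matrix $X(A)\,A$ is doubly stochastic, then $A=\begin{pmatrix} a & a\\ 1-a & 1-a\end{pmatrix}$ for some $a\in(0,1)$ with $a\neq 1/2$, and $S(A)=X(A)\,A=\begin{pmatrix} 1/2 & 1/2\\ 1/2 & 1/2\end{pmatrix}$.
   Context: A positive matrix has all entries positive. For an $n\times n$ matrix $A=(a_{i,j})$ let $\mathrm{row}_i(A)=\sum_j a_{i,j}$ and $\mathrm{col}_j(A)=\sum_i a_{i,j}$. $A$ is row stochastic if all row sums equal $1$, column stochastic if all column sums equal $1$, and doubly stochastic if both. For positive $A$ let $X(A)=\mathrm{diag}(1/\mathrm{row}_1(A),\ldots,1/\mathrm{row}_n(A))$ and $Y(A)=\mathrm{diag}(1/\mathrm{col}_1(A),\ldots,1/\mathrm{col}_n(A))$. $S(A)$ denotes the alternate minimization limit of $A$: the limit of the sequence $A^{(0)}=A$, $A^{(2k+1)}=A^{(2k)}\,Y(A^{(2k)})$, $A^{(2k+2)}=X(A^{(2k+1)})\,A^{(2k+1)}$ ($k\ge 0$), which converges to a doubly stochastic matrix and which is unchanged if $A$ is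 replaced by $PAQ$ for positive diagonal $P,Q$. *)

theory Defs
  imports "HOL-Analysis.Analysis"
begin

definition positive_matrix :: "real^'n^'n \<Rightarrow> bool" where
  "positive_matrix A \<longleftrightarrow> (\<forall>i j. A $ i $ j > 0)"

definition row_sum :: "real^'n^'n \<Rightarrow> 'n \<Rightarrow> real" where
  "row_sum A i = (\<Sum>j\<in>UNIV. A $ i $ j)"

definition col_sum :: "real^'n^'n \<Rightarrow> 'n \<Rightarrow> real" where
  "col_sum A j = (\<Sum>i\<in>UNIV. A $ i $ j)"

definition row_stochastic :: "real^'n^'n \<Rightarrow> bool" where
  "row_stochastic A \<longleftrightarrow> (\<forall>i. row_sum A i = 1)"

definition col_stochastic :: "real^'n^'n \<Rightarrow> bool" where
  "col_stochastic A \<longleftrightarrow> (\<forall>j. col_sum A j = 1)"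

definition doubly_stochastic :: "real^'n^'n \<Rightarrow> bool" where
  "doubly_stochastic A \<longleftrightarrow> row_stochastic A \<and> col_stochastic A"

definition diag_mat :: "('n \<Rightarrow> real) \<Rightarrow> real^'n^'n" where
  "diag_mat d = (\<chi> i j. if i = j then d i else 0)"

definition Xm :: "real^'n^'n \<Rightarrow> real^'n^'n" where
  "Xm A = diag_mat (\<lambda>i. 1 / row_sum A i)"

definition Ym :: "real^'n^'n \<Rightarrow> real^'n^'n" where
  "Ym A = diag_mat (\<lambda>j. 1 / col_sum A j)"

fun alt_seq :: "real^'n^'n \<Rightarrow> nat \<Rightarrow> real^'n^'n" where
  "alt_seq A 0 = A"
| "alt_seq A (Suc m) =
     (if even m then alt_seq A m ** Ym (alt_seq A m)
      else Xm (alt_seq A m) ** alt_seq A m)"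

definition S_lim :: "real^'n^'n \<Rightarrow> real^'n^'n" where
  "S_lim A = lim (alt_seq A)"

end

theory Submission
  imports Defs
begin

text \<open>Write the row stochastic matrix as \<open>A = [[p, 1 - p], [q, 1 - q]]\<close> with \<open>s = p + q \<noteq> 1\<close>.
  Its column sums are \<open>s\<close> and \<open>2 - s\<close>, and the first row of \<open>A Y(A)\<close> sums to 1 iff
  \<open>(1 - s) (2 p - s) = 0\<close>; hence \<open>p = q\<close>, both rows of \<open>A\<close> agree and \<open>A Y(A)\<close> has all entries
  \<open>1/2\<close>. A doubly stochastic matrix is fixed by both scalings, so the alternate minimization
  sequence is constant from the first doubly stochastic iterate on and \<open>S(A)\<close> is that iterate.
  The column stochastic case is the transpose of the row stochastic one, except that the
  sequence starts with the (now trivial) column scaling and reaches \<open>X(B) B\<close> one step later.\<close>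

lemma matrix_mult_Ym_nth: "(A ** Ym A) $ i $ j = A $ i $ j / col_sum A j"
  unfolding matrix_matrix_mult_def Ym_def diag_mat_def
  by (simp add: if_distrib cong: if_cong)

lemma Xm_matrix_mult_nth: "(Xm A ** A) $ i $ j = A $ i $ j / row_sum A i"
  unfolding matrix_matrix_mult_def Xm_def diag_mat_def
  by (simp add: if_distrib[of "\<lambda>x. x * _"] cong: if_cong)

lemma matrix_mult_Ym_col_stochastic: "col_stochastic A \<Longrightarrow> A ** Ym A = A"
  by (simp add: vec_eq_iff matrix_mult_Ym_nth col_stochastic_def)

lemma Xm_matrix_mult_row_stochastic: "row_stochastic A \<Longrightarrow> Xm A ** A = A"
  by (simp add: vec_eq_iff Xm_matrix_mult_nth row_stochastic_def)

lemma transpose_nth: "transpose A $ i $ j = A $ j $ i"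
  by (simp add: transpose_def)

lemma row_sum_transpose: "row_sum (transpose A) = col_sum A"
  by (simp add: fun_eq_iff row_sum_def col_sum_def transpose_def)

lemma col_sum_transpose: "col_sum (transpose A) = row_sum A"
  by (simp add: fun_eq_iff row_sum_def col_sum_def transpose_def)

lemma positive_matrix_transpose: "positive_matrix (transpose A) \<longleftrightarrow> positive_matrix A"
  unfolding positive_matrix_def transpose_def by auto

lemma row_stochastic_transpose: "row_stochastic (transpose A) \<longleftrightarrow> col_stochastic A"
  by (simp add: row_stochastic_def col_stochastic_def row_sum_transpose)

lemma col_stochastic_transpose: "col_stochastic (transpose A) \<longleftrightarrow> row_stochastic A"
  by (simp add: row_stochastic_def col_stochastic_def col_sum_transpose)

lemma Xm_matrix_mult_eq_transpose:
  "Xm A ** A = transpose (transpose A ** Ym (transpose A))"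
  by (simp add: vec_eq_iff Xm_matrix_mult_nth matrix_mult_Ym_nth col_sum_transpose transpose_nth)

lemma alt_seq_doubly_stochastic_stationary:
  assumes "doubly_stochastic (alt_seq A k)" and "k \<le> n"
  shows "alt_seq A n = alt_seq A k"
  using \<open>k \<le> n\<close>
proof (induction n rule: dec_induct)
  case (step n)
  from step.IH assms(1) show ?case
    unfolding alt_seq.simps(2) doubly_stochastic_def
    by (simp add: matrix_mult_Ym_col_stochastic Xm_matrix_mult_row_stochastic)
qed simp

lemma S_lim_doubly_stochastic_iterate:
  assumes "doubly_stochastic (alt_seq A k)"
  shows "S_lim A = alt_seq A k"
proof -
  have "eventually (\<lambda>n. alt_seq A n = alt_seq A k) sequentially"
    by (rule eventually_sequentiallyI) (rule alt_seq_doubly_stochastic_stationary[OF assms])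
  then have "alt_seq A \<longlonglongrightarrow> alt_seq A k"
    by (rule tendsto_eventually)
  then show ?thesis
    unfolding S_lim_def by (rule limI)
qed

lemma matrix_2x2_eq_iff:
  "(M :: real^2^2) = vector [vector [a, b], vector [c, d]] \<longleftrightarrow>
    M$1$1 = a \<and> M$1$2 = b \<and> M$2$1 = c \<and> M$2$2 = d"
  by (auto simp: vec_eq_iff forall_2)

lemma transpose_2x2:
  "transpose (vector [vector [a, b], vector [c, d]] :: real^2^2) =
    vector [vector [a, c], vector [b, d]]"
  by (simp add: matrix_2x2_eq_iff transpose_def)

lemma scaled_row_sum_eq_1_imp:
  fixes p s :: real
  assumes "0 < s" "s < 2" "s \<noteq> 1" and "p / s + (1 - p) / (2 - s) = 1"
  shows "2 * p = s"
proof -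
  have "(1 - s) * (2 * p - s) = 0"
    using assms by (simp add: field_simps)
  with \<open>s \<noteq> 1\<close> show ?thesis by simp
qed

lemma equal_rows_matrix_mult_Ym:
  assumes "0 < a" "a < 1"
  defines "A \<equiv> vector [vector [a, 1 - a], vector [a, 1 - a]] :: real^2^2"
  shows "A ** Ym A = vector [vector [1/2, 1/2], vector [1/2, 1/2]]"
  using assms by (simp add: matrix_2x2_eq_iff matrix_mult_Ym_nth col_sum_def sum_2)

lemma equal_cols_Xm_matrix_mult:
  assumes "0 < a" "a < 1"
  defines "B \<equiv> vector [vector [a, a], vector [1 - a, 1 - a]] :: real^2^2"
  shows "Xm B ** B = vector [vector [1/2, 1/2], vector [1/2, 1/2]]"
  using assms by (simp add: matrix_2x2_eq_iff Xm_matrix_mult_nth row_sum_def sum_2)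

lemma row_stochastic_col_scaling_shape:
  fixes A :: "real^2^2"
  assumes "positive_matrix A" "row_stochastic A" "\<not> col_stochastic A"
    and "row_stochastic (A ** Ym A)"
  shows "\<exists>a. 0 < a \<and> a < 1 \<and> a \<noteq> 1/2 \<and>
    A = vector [vector [a, 1 - a], vector [a, 1 - a]]"
proof -
  define p q where "p = A$1$1" and "q = A$2$1"
  have pos: "0 < p" "0 < q" "0 < A$1$2" "0 < A$2$2"
    using assms(1) by (auto simp: positive_matrix_def p_def q_def)
  have rows: "A$1$2 = 1 - p" "A$2$2 = 1 - q"
    using assms(2) by (auto simp: row_stochastic_def row_sum_def sum_2 forall_2 p_def q_def)
  have cols: "col_sum A 1 = p + q" "col_sum A 2 = 2 - (p + q)"
    by (simp_all add: col_sum_def sum_2 rows p_def q_def)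
  have "p + q \<noteq> 1"
    using assms(3) by (auto simp: col_stochastic_def forall_2 cols)
  moreover have "p / (p + q) + (1 - p) / (2 - (p + q)) = 1"
    using assms(4) by (simp add: row_stochastic_def row_sum_def sum_2 forall_2 matrix_mult_Ym_nth
        cols rows flip: p_def)
  ultimately have "q = p"
    using scaled_row_sum_eq_1_imp[of "p + q" p] pos rows by simp
  with pos rows \<open>p + q \<noteq> 1\<close> show ?thesis
    by (intro exI[of _ p]) (auto simp: matrix_2x2_eq_iff p_def q_def)
qed

lemma col_stochastic_row_scaling_shape:
  fixes B :: "real^2^2"
  assumes "positive_matrix B" "col_stochastic B" "\<not> row_stochastic B"
    and "col_stochastic (Xm B ** B)"
  shows "\<exists>a. 0 < a \<and> a < 1 \<and> a \<noteq> 1/2 \<and>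
    B = vector [vector [a, a], vector [1 - a, 1 - a]]"
proof -
  have "row_stochastic (transpose B ** Ym (transpose B))"
    using assms(4) by (simp add: Xm_matrix_mult_eq_transpose col_stochastic_transpose)
  with assms obtain a where "0 < a" "a < 1" "a \<noteq> 1/2"
    and "transpose B = vector [vector [a, 1 - a], vector [a, 1 - a]]"
    using row_stochastic_col_scaling_shape[of "transpose B"]
    by (auto simp: positive_matrix_transpose row_stochastic_transpose col_stochastic_transpose)
  then show ?thesis
    by (metis transpose_transpose transpose_2x2)
qed

theorem theorem8:
  fixes A B :: "real^2^2"
  shows
  "(positive_matrix A \<and> row_stochastic A \<and> \<not> col_stochastic A \<and>
      doubly_stochastic (A ** Ym A)
    \<longrightarrow> (\<exists>a. 0 < a \<and> a < 1 \<and> a \<noteq> 1/2 \<and>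
            A = vector [vector [a, 1 - a], vector [a, 1 - a]]) \<and>
        S_lim A = A ** Ym A \<and>
        A ** Ym A = vector [vector [1/2, 1/2], vector [1/2, 1/2]])
   \<and>
   (positive_matrix B \<and> col_stochastic B \<and> \<not> row_stochastic B \<and>
      doubly_stochastic (Xm B ** B)
    \<longrightarrow> (\<exists>a. 0 < a \<and> a < 1 \<and> a \<noteq> 1/2 \<and>
            B = vector [vector [a, a], vector [1 - a, 1 - a]]) \<and>
        S_lim B = Xm B ** B \<and>
        Xm B ** B = vector [vector [1/2, 1/2], vector [1/2, 1/2]])"
proof (intro conjI impI)
  assume "positive_matrix A \<and> row_stochastic A \<and> \<not> col_stochastic A \<and>
      doubly_stochastic (A ** Ym A)"
  then show shape: "\<exists>a. 0 < a \<and> a < 1 \<and> a \<noteq> 1/2 \<and>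
      A = vector [vector [a, 1 - a], vector [a, 1 - a]]"
    and "S_lim A = A ** Ym A"
    using row_stochastic_col_scaling_shape S_lim_doubly_stochastic_iterate[of A 1]
    by (auto simp: doubly_stochastic_def)
  from shape show "A ** Ym A = vector [vector [1/2, 1/2], vector [1/2, 1/2]]"
    using equal_rows_matrix_mult_Ym by auto
next
  assume "positive_matrix B \<and> col_stochastic B \<and> \<not> row_stochastic B \<and>
      doubly_stochastic (Xm B ** B)"
  then show shape: "\<exists>a. 0 < a \<and> a < 1 \<and> a \<noteq> 1/2 \<and>
      B = vector [vector [a, a], vector [1 - a, 1 - a]]"
    and "S_lim B = Xm B ** B"
    using col_stochastic_row_scaling_shape S_lim_doubly_stochastic_iterate[of B 2]
    by (auto simp: doubly_stochastic_def numeral_2_eq_2 matrix_mult_Ym_col_stochastic)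
  from shape show "Xm B ** B = vector [vector [1/2, 1/2], vector [1/2, 1/2]]"
    using equal_cols_Xm_matrix_mult by auto
qed

end
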